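(* Let $\mathcal{T}=[0,T_{max}]$, $\mathcal{T}_d,\mathcal{T}_a\subseteq\mathcal{T}$ compact, $\mathcal{X}=[X_{min},X_{max}]$ with $0\le X_{min}<X_{max}$, $m$ a probability measure on $\mathcal{X}\times\mathcal{T}_a$, $G>0$, and let $V:\mathbb{R}^+\to\mathbb{R}^+$ be a strictly decreasing Lipschitz continuous speed function. For $F\in\mathcal{P}_{m,G}$ let $z_F\in\mathcal{C}(\mathcal{T})$ denote the unique solution of $z_F(t)=\int_0^t V\big(F(S_s(z_F))\big)\,ds$, $t\in\mathcal{T}$. If $(F_k)_{k\in\mathbb{N}}\subseteq\mathcal{P}_{m,G}$ converges weakly to $F$ (so that $F\in\mathcal{P}_{m,G}$), then $z_{F_k}\to z_F$ uniformly on $\mathcal{T}$.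
   Context: $\mathcal{C}(\mathcal{T})$ denotes the space of real-valued continuous functions on $\mathcal{T}$ with the uniform norm. $\lambda_2$ denotes Lebesgue measure on $\mathbb{R}^2$. $\mathcal{P}_{m,G}$ is the set of all Borel probability measures $F$ on $\mathcal{T}_d\times\mathcal{X}$ such that (i) $F(B)\le G\,\lambda_2(B)$ for every Borel set $B\subseteq\mathcal{T}_d\times\mathcal{X}$, and (ii) $F(\mathcal{T}_d\times B)=m(B\times\mathcal{T}_a)$ for every Borel set $B\subseteq\mathcal{X}$. For $z\in\mathcal{C}(\mathcal{T})$ and $t\in\mathcal{T}$, $S_t(z):=\{(\tau,\xi)\,:\,\tau\in[0,t]\cap\mathcal{T}_d,\ \xi\in(z(t)-z(\tau),\infty)\cap\mathcal{X}\}$. *)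

theory Defs
  imports "HOL-Probability.Probability"
begin

text \<open>Borel probability measures on the plane are modelled as measures on
  the type real \<times> real with the Borel sigma-algebra; the first component is the
  time coordinate tau (in T_d), the second the space coordinate xi (in X).\<close>

definition P_mG ::
  "real set \<Rightarrow> real set \<Rightarrow> real set \<Rightarrow> (real \<times> real) measure \<Rightarrow> real \<Rightarrow> (real \<times> real) measure set"
  where "P_mG Td Ta X m G = {F.
     prob_space F \<and> sets F = sets borel \<and> emeasure F (Td \<times> X) = 1 \<and>
     (\<forall>B\<in>sets borel. B \<subseteq> Td \<times> X \<longrightarrow>
         emeasure F B \<le> ennreal G * emeasure lborel B) \<and>
     (\<forall>B\<in>sets borel. B \<subseteq> X \<longrightarrow> emeasure F (Td \<times> B) = emeasure m (B \<times> Ta))}"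

definition S_set :: "real set \<Rightarrow> real set \<Rightarrow> real \<Rightarrow> (real \<Rightarrow> real) \<Rightarrow> (real \<times> real) set"
  where "S_set Td X t z = {(\<tau>, \<xi>). \<tau> \<in> {0..t} \<inter> Td \<and> \<xi> \<in> {z t - z \<tau> <..} \<inter> X}"

definition weak_conv_plane :: "(nat \<Rightarrow> (real \<times> real) measure) \<Rightarrow> (real \<times> real) measure \<Rightarrow> bool"
  where "weak_conv_plane Fs F \<longleftrightarrow>
    (\<forall>f :: real \<times> real \<Rightarrow> real. continuous_on UNIV f \<longrightarrow> bounded (range f) \<longrightarrow>
       (\<lambda>k. integral\<^sup>L (Fs k) f) \<longlonglongrightarrow> integral\<^sup>L F f)"

definition solves_eq :: "real \<Rightarrow> real set \<Rightarrow> real set \<Rightarrow> (real \<Rightarrow> real) \<Rightarrow>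
    (real \<times> real) measure \<Rightarrow> (real \<Rightarrow> real) \<Rightarrow> bool"
  where "solves_eq Tmax Td X V F z \<longleftrightarrow>
    continuous_on {0..Tmax} z \<and>
    (\<forall>t\<in>{0..Tmax}. ((\<lambda>s. V (measure F (S_set Td X s z))) has_integral z t) {0..t})"

end

theory Submission
  imports Defs
begin

text \<open>
  Two consequences of the density bound \<open>F \<le> G \<lambda>\<^sub>2\<close> drive the proof.
  First, moving the boundary curve \<open>\<xi> = y s - y \<tau>\<close> of \<open>S\<^sub>s(y)\<close> by at most \<open>\<eta>\<close> changes
  \<open>F(S\<^sub>s(y))\<close> by at most \<open>2 G s \<eta>\<close>, since the symmetric difference lies in a band of width
  \<open>2 \<eta>\<close>. With the Lipschitz constant \<open>L\<close> of \<open>V\<close> this gives a Gronwall-type inequality for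
  \<open>\<bar>z\<^sub>k - z\<bar>\<close> which, in the weighted norm \<open>sup\<^sub>t e\<^bsup>-\<lambda> t\<^esup> \<bar>z\<^sub>k t - z t\<bar>\<close> with
  \<open>\<lambda> > 4 L G T\<close>, yields
  \<open>\<parallel>z\<^sub>k - z\<parallel>\<^sub>\<infinity> \<le> 2 e\<^bsup>\<lambda> T\<^esup> L \<integral>\<^sub>0\<^sup>T \<bar>F\<^sub>k(S\<^sub>s(z)) - F(S\<^sub>s(z))\<bar> ds\<close>.
  Second, the \<open>d\<close>-neighbourhood of the boundary of \<open>S\<^sub>s(z)\<close> has \<open>F\<close>-measure \<open>O(d)\<close>, so the
  indicator of \<open>S\<^sub>s(z)\<close> is squeezed between continuous functions whose \<open>F\<close>-integrals
  differ by \<open>O(d)\<close>. Weak convergence thus gives \<open>F\<^sub>k(S\<^sub>s(z)) \<rightarrow> F(S\<^sub>s(z))\<close> for every \<open>s\<close>,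
  and the integral above tends to \<open>0\<close> by dominated convergence.
\<close>

lemma integrable_continuous_bounded:
  fixes f :: "'a::topological_space \<Rightarrow> real"
  assumes "finite_measure F" "sets F = sets borel" "continuous_on UNIV f" "\<And>x. \<bar>f x\<bar> \<le> B"
  shows "integrable F f"
proof -
  have "f \<in> borel_measurable F"
    by (subst measurable_cong_sets[OF assms(2) refl])
      (rule borel_measurable_continuous_onI[OF assms(3)])
  then show ?thesis
    using assms by (intro finite_measure.integrable_const_bound[where B = B]) auto
qed

lemma has_integral_exp_linear:
  fixes lam t :: real
  assumes "lam \<noteq> 0" "0 \<le> t"
  shows "((\<lambda>s. exp (lam * s)) has_integral (exp (lam * t) - 1) / lam) {0..t}"
proof -
  have "((\<lambda>s. exp (lam * s)) has_integral (exp (lam * t) / lam - exp (lam * 0) / lam)) {0..t}"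
  proof (rule fundamental_theorem_of_calculus[OF \<open>0 \<le> t\<close>])
    fix s
    show "((\<lambda>s. exp (lam * s) / lam) has_vector_derivative exp (lam * s)) (at s within {0..t})"
      using \<open>lam \<noteq> 0\<close>
      by (auto intro!: derivative_eq_intros
          simp: has_real_derivative_iff_has_vector_derivative[symmetric])
  qed
  then show ?thesis by (simp add: diff_divide_distrib)
qed

text \<open>Gronwall's inequality in Bielecki's form: \<open>step\<close> says that the weighted norm
  \<open>sup\<^sub>\<tau> w \<tau> e\<^bsup>-lam \<tau>\<^esup>\<close> is halved up to the error \<open>E\<close>.\<close>

lemma bielecki_bound:
  fixes w :: "real \<Rightarrow> real"
  assumes w: "continuous_on {0..T} w" and "0 \<le> lam" "0 \<le> E"
    and step: "\<And>M t. (\<And>\<tau>. \<tau> \<in> {0..T} \<Longrightarrow> w \<tau> \<le> M * exp (lam * \<tau>)) \<Longrightarrow> t \<in> {0..T}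
      \<Longrightarrow> w t \<le> M / 2 * exp (lam * t) + E"
    and t: "t \<in> {0..T}"
  shows "w t \<le> 2 * E * exp (lam * t)"
proof -
  define M where "M = (SUP \<tau>\<in>{0..T}. w \<tau> * exp (- (lam * \<tau>)))"
  have bdd: "bdd_above ((\<lambda>\<tau>. w \<tau> * exp (- (lam * \<tau>))) ` {0..T})"
    by (intro bounded_imp_bdd_above compact_imp_bounded compact_continuous_image
        continuous_intros w) auto
  have w_le: "w \<tau> \<le> M * exp (lam * \<tau>)" if "\<tau> \<in> {0..T}" for \<tau>
  proof -
    have "w \<tau> * exp (- (lam * \<tau>)) \<le> M"
      unfolding M_def by (rule cSUP_upper[OF that bdd])
    then show ?thesis by (simp add: exp_minus divide_inverse[symmetric] pos_divide_le_eq)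
  qed
  have "(SUP \<tau>\<in>{0..T}. w \<tau> * exp (- (lam * \<tau>))) \<le> M / 2 + E"
  proof (rule cSUP_least)
    show "{0..T} \<noteq> {}" using t by auto
    fix \<tau>
    assume \<tau>: "\<tau> \<in> {0..T}"
    have "w \<tau> * exp (- (lam * \<tau>)) \<le> (M / 2 * exp (lam * \<tau>) + E) * exp (- (lam * \<tau>))"
      using step[OF w_le \<tau>] by (intro mult_right_mono) auto
    also have "\<dots> = M / 2 + E * exp (- (lam * \<tau>))"
      by (simp add: algebra_simps exp_minus)
    also have "\<dots> \<le> M / 2 + E"
      using \<tau> \<open>0 \<le> lam\<close> \<open>0 \<le> E\<close> by (simp add: mult_left_le)
    finally show "w \<tau> * exp (- (lam * \<tau>)) \<le> M / 2 + E" .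
  qed
  then have "M \<le> 2 * E" by (simp add: M_def[symmetric])
  then have "M * exp (lam * t) \<le> 2 * E * exp (lam * t)" by (intro mult_right_mono) auto
  then show ?thesis using w_le[OF t] by linarith
qed

lemma uniform_limit_dist_le:
  fixes b :: "'a \<Rightarrow> real"
  assumes "\<And>k x. x \<in> S \<Longrightarrow> dist (f k x) (g x) \<le> b k" and "(b \<longlongrightarrow> 0) F"
  shows "uniform_limit S f g F"
proof (rule uniform_limitI)
  fix e :: real
  assume "0 < e"
  with \<open>(b \<longlongrightarrow> 0) F\<close> have "\<forall>\<^sub>F k in F. b k < e"
    by (rule order_tendstoD)
  then show "\<forall>\<^sub>F k in F. \<forall>x\<in>S. dist (f k x) (g x) < e"
    by eventually_elim (use assms(1) in \<open>auto intro: le_less_trans\<close>)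
qed

lemma emeasure_lborel_band_le:
  fixes B :: "(real \<times> real) set"
  assumes B: "B \<in> sets borel" and B_strip: "B \<subseteq> {a..b} \<times> UNIV" and "a \<le> b" "0 \<le> w"
    and fibre: "\<And>\<tau>. \<exists>l. {\<xi>. (\<tau>, \<xi>) \<in> B} \<subseteq> {l..l + w}"
  shows "emeasure lborel B \<le> ennreal ((b - a) * w)"
proof -
  have "emeasure lborel B = emeasure (lborel \<Otimes>\<^sub>M (lborel :: real measure)) B"
    by (simp add: lborel_prod)
  also have "\<dots> = (\<integral>\<^sup>+\<tau>. emeasure lborel (Pair \<tau> -` B) \<partial>lborel)"
    using B by (intro sigma_finite_measure.emeasure_pair_measure_alt sigma_finite_lborel)
      (simp only: lborel_prod sets_lborel)
  also have "\<dots> \<le> (\<integral>\<^sup>+\<tau>. ennreal w * indicator {a..b} \<tau> \<partial>lborel)"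
  proof (rule nn_integral_mono)
    fix \<tau>
    show "emeasure lborel (Pair \<tau> -` B) \<le> ennreal w * indicator {a..b} \<tau>"
    proof (cases "\<tau> \<in> {a..b}")
      case True
      obtain l where "{\<xi>. (\<tau>, \<xi>) \<in> B} \<subseteq> {l..l + w}" using fibre by blast
      then have "emeasure lborel (Pair \<tau> -` B) \<le> emeasure lborel {l..l + w}"
        by (intro emeasure_mono) (auto simp: vimage_def)
      then show ?thesis using True \<open>0 \<le> w\<close> by simp
    next
      case False
      then have "Pair \<tau> -` B = {}" using B_strip by auto
      then show ?thesis by simp
    qed
  qed
  also have "\<dots> = ennreal ((b - a) * w)"
    using assms(3,4) by (simp add: nn_integral_cmult ennreal_mult' mult.commute)
  finally show ?thesis .
qed

section \<open>Measures with density bounded by \<open>G\<close>\<close>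

lemma P_mG_D:
  assumes "F \<in> P_mG Td Ta X m G"
  shows "prob_space F" "sets F = sets borel" "AE x in F. x \<in> Td \<times> X"
proof -
  show F: "prob_space F" "sets F = sets borel" using assms by (auto simp: P_mG_def)
  have "emeasure F (Td \<times> X) = 1" using assms by (simp add: P_mG_def)
  then show "AE x in F. x \<in> Td \<times> X"
    using F by (intro prob_space.AE_prob_1) (auto simp: measure_def)
qed

lemma measure_P_mG_band_le:
  assumes F: "F \<in> P_mG Td Ta X m G" and "0 \<le> G"
    and B: "B \<in> sets borel" "B \<subseteq> Td \<times> X" "B \<subseteq> {a..b} \<times> UNIV" and "a \<le> b" "0 \<le> w"
    and "\<And>\<tau>. \<exists>l. {\<xi>. (\<tau>, \<xi>) \<in> B} \<subseteq> {l..l + w}"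
  shows "measure F B \<le> G * ((b - a) * w)"
proof -
  have "emeasure F B \<le> ennreal G * emeasure lborel B"
    using F B by (auto simp: P_mG_def)
  also have "\<dots> \<le> ennreal G * ennreal ((b - a) * w)"
    by (intro mult_left_mono emeasure_lborel_band_le) (use assms in auto)
  also have "\<dots> = ennreal (G * ((b - a) * w))"
    using assms by (simp add: ennreal_mult)
  finally show ?thesis
    using assms by (simp add: measure_def enn2real_leI)
qed

lemma measure_P_mG_le_add_band:
  assumes F: "F \<in> P_mG Td Ta X m G" and "0 \<le> G"
    and AB: "A \<in> sets borel" "B \<in> sets borel" "B - A \<subseteq> Td \<times> X" "B - A \<subseteq> {a..b} \<times> UNIV"
    and "a \<le> b" "0 \<le> w" and "\<And>\<tau>. \<exists>l. {\<xi>. (\<tau>, \<xi>) \<in> B - A} \<subseteq> {l..l + w}"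
  shows "measure F B \<le> measure F A + G * ((b - a) * w)"
proof -
  interpret prob_space F using P_mG_D(1)[OF F] .
  have events: "A \<in> events" "B \<in> events" using AB P_mG_D(2)[OF F] by auto
  have "measure F B \<le> measure F (A \<union> B)"
    using events by (intro finite_measure_mono) auto
  also have "\<dots> = measure F A + measure F (B - A)"
    using events by (rule finite_measure_Union')
  also have "measure F (B - A) \<le> G * ((b - a) * w)"
    using AB by (intro measure_P_mG_band_le[OF F]) (use assms in auto)
  finally show ?thesis by simp
qed

definition above_graph :: "real set \<Rightarrow> real set \<Rightarrow> real \<Rightarrow> (real \<Rightarrow> real) \<Rightarrow> (real \<times> real) set"
  where "above_graph Td X s c = {(\<tau>, \<xi>). \<tau> \<in> {0..s} \<inter> Td \<and> \<xi> \<in> X \<and> c \<tau> < \<xi>}"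

lemma above_graph_subset: "above_graph Td X s c \<subseteq> Td \<times> X"
  by (auto simp: above_graph_def)

lemma above_graph_borel:
  assumes "closed Td" "closed X" "continuous_on UNIV c"
  shows "above_graph Td X s c \<in> sets borel"
proof -
  have "above_graph Td X s c = (({0..s} \<inter> Td) \<times> X) \<inter> {x. c (fst x) < snd x}"
    by (auto simp: above_graph_def)
  moreover have "closed (({0..s} \<inter> Td) \<times> X)"
    using assms by (intro closed_Times closed_Int) auto
  moreover have "open {x. c (fst x) < snd x}"
    by (intro open_Collect_less continuous_intros continuous_on_compose2[OF assms(3)]) auto
  ultimately show ?thesis by auto
qed

lemma measure_above_graph_lipschitz:
  assumes F: "F \<in> P_mG Td Ta X m G" and "0 \<le> G" and "closed Td" "closed X"
    and c: "continuous_on UNIV c1" "continuous_on UNIV c2" and "0 \<le> s"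
    and close: "\<And>\<tau>. \<tau> \<in> {0..s} \<Longrightarrow> \<bar>c1 \<tau> - c2 \<tau>\<bar> \<le> \<eta>"
  shows "\<bar>measure F (above_graph Td X s c1) - measure F (above_graph Td X s c2)\<bar> \<le> G * (s * \<eta>)"
proof -
  have "\<eta> \<ge> 0" using close[of 0] \<open>0 \<le> s\<close> by auto
  have "measure F (above_graph Td X s c) \<le> measure F (above_graph Td X s c') + G * ((s - 0) * \<eta>)"
    if "c \<in> {c1, c2}" "c' \<in> {c1, c2}" for c c'
  proof (rule measure_P_mG_le_add_band[OF F])
    fix \<tau>
    have "\<bar>c \<tau> - c' \<tau>\<bar> \<le> \<eta>" if "\<tau> \<in> {0..s}"
      using close[OF that] \<open>\<eta> \<ge> 0\<close> \<open>c \<in> {c1, c2}\<close> \<open>c' \<in> {c1, c2}\<close> by auto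
    then show "\<exists>l. {\<xi>. (\<tau>, \<xi>) \<in> above_graph Td X s c - above_graph Td X s c'} \<subseteq> {l..l + \<eta>}"
      by (intro exI[of _ "c' \<tau> - \<eta>"]) (auto simp: above_graph_def)
  qed (use assms that above_graph_borel above_graph_subset \<open>\<eta> \<ge> 0\<close> in \<open>auto simp: above_graph_def\<close>)
  from this[of c1 c2] this[of c2 c1] show ?thesis by auto
qed

lemma measure_above_graph_time_lipschitz:
  assumes F: "F \<in> P_mG Td Ta {Xmin..Xmax} m G" and "0 \<le> G" "Xmin \<le> Xmax" "closed Td"
    and c: "continuous_on UNIV c"
  shows "\<bar>measure F (above_graph Td {Xmin..Xmax} s' c)
      - measure F (above_graph Td {Xmin..Xmax} s c)\<bar> \<le> G * (\<bar>s' - s\<bar> * (Xmax - Xmin))"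
proof -
  interpret prob_space F using P_mG_D(1)[OF F] .
  have borel: "above_graph Td {Xmin..Xmax} t c \<in> sets borel" for t
    using assms by (intro above_graph_borel) auto
  have "measure F (above_graph Td {Xmin..Xmax} t c) \<le> measure F (above_graph Td {Xmin..Xmax} t' c)"
    and "measure F (above_graph Td {Xmin..Xmax} t' c)
      \<le> measure F (above_graph Td {Xmin..Xmax} t c) + G * ((t' - t) * (Xmax - Xmin))"
    if "t \<le> t'" for t t'
  proof -
    show "measure F (above_graph Td {Xmin..Xmax} t c)
      \<le> measure F (above_graph Td {Xmin..Xmax} t' c)"
      using borel P_mG_D(2)[OF F] \<open>t \<le> t'\<close>
      by (intro finite_measure_mono) (auto simp: above_graph_def)
    show "measure F (above_graph Td {Xmin..Xmax} t' c)
      \<le> measure F (above_graph Td {Xmin..Xmax} t c) + G * ((t' - t) * (Xmax - Xmin))"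
      using borel above_graph_subset assms \<open>t \<le> t'\<close>
      by (intro measure_P_mG_le_add_band[OF F] exI[of _ Xmin]) (auto simp: above_graph_def)
  qed
  from this[of s s'] this[of s' s] show ?thesis
    by (cases "s \<le> s'") (auto simp: abs_le_iff)
qed

section \<open>Weak convergence on regions above a graph\<close>

lemma weak_conv_plane_tendsto_measure:
  assumes weak: "weak_conv_plane Fs F"
    and approx: "\<And>e. 0 < e \<Longrightarrow> \<exists>f g.
      continuous_on UNIV f \<and> bounded (range f) \<and> continuous_on UNIV g \<and> bounded (range g) \<and>
      (\<forall>k. integral\<^sup>L (Fs k) g \<le> measure (Fs k) A \<and> measure (Fs k) A \<le> integral\<^sup>L (Fs k) f) \<and>
      integral\<^sup>L F f \<le> measure F A + e \<and> measure F A - e \<le> integral\<^sup>L F g"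
  shows "(\<lambda>k. measure (Fs k) A) \<longlonglongrightarrow> measure F A"
proof (rule tendstoI)
  fix e :: real
  assume "0 < e"
  then obtain f g where fg: "continuous_on UNIV f" "bounded (range f)"
      "continuous_on UNIV g" "bounded (range g)"
    and sandwich: "\<And>k. integral\<^sup>L (Fs k) g \<le> measure (Fs k) A"
      "\<And>k. measure (Fs k) A \<le> integral\<^sup>L (Fs k) f"
    and limits: "integral\<^sup>L F f \<le> measure F A + e / 2" "measure F A - e / 2 \<le> integral\<^sup>L F g"
    using approx[of "e / 2"] by auto
  have f_lim: "(\<lambda>k. integral\<^sup>L (Fs k) f) \<longlonglongrightarrow> integral\<^sup>L F f"
    and g_lim: "(\<lambda>k. integral\<^sup>L (Fs k) g) \<longlonglongrightarrow> integral\<^sup>L F g"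
    using weak fg unfolding weak_conv_plane_def by blast+
  have "0 < e / 2" using \<open>0 < e\<close> by simp
  from tendstoD[OF f_lim this] tendstoD[OF g_lim this]
  show "\<forall>\<^sub>F k in sequentially. dist (measure (Fs k) A) (measure F A) < e"
  proof eventually_elim
    case (elim k)
    then show ?case
      using sandwich(1)[of k] sandwich(2)[of k] limits unfolding dist_real_def abs_less_iff
      by linarith
  qed
qed

definition ramp :: "real \<Rightarrow> real \<Rightarrow> real"
  where "ramp d x = min 1 (max 0 (x / d))"

lemma continuous_on_ramp: "continuous_on UNIV (ramp d)"
  unfolding ramp_def divide_inverse by (intro continuous_intros)

lemma ramp_bounds: "0 \<le> ramp d x" "ramp d x \<le> 1"
  by (auto simp: ramp_def)

lemma ramp_eq_1: "0 < d \<Longrightarrow> d \<le> x \<Longrightarrow> ramp d x = 1"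
  by (auto simp: ramp_def)

lemma ramp_eq_0: "0 < d \<Longrightarrow> x \<le> 0 \<Longrightarrow> ramp d x = 0"
  by (auto simp: ramp_def divide_nonpos_pos)

definition upper_approx :: "real \<Rightarrow> real \<Rightarrow> (real \<Rightarrow> real) \<Rightarrow> real \<times> real \<Rightarrow> real"
  where "upper_approx d s c x = ramp d (s + d - fst x) * ramp d (snd x - c (fst x) + d)"

definition lower_approx :: "real \<Rightarrow> real \<Rightarrow> (real \<Rightarrow> real) \<Rightarrow> real \<times> real \<Rightarrow> real"
  where "lower_approx d s c x = ramp d (s - fst x) * ramp d (snd x - c (fst x) - d)"

lemma continuous_on_approx:
  assumes "continuous_on UNIV c"
  shows "continuous_on UNIV (upper_approx d s c)" "continuous_on UNIV (lower_approx d s c)"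
  unfolding upper_approx_def[abs_def] lower_approx_def[abs_def]
  by (intro continuous_intros continuous_on_compose2[OF continuous_on_ramp]
      continuous_on_compose2[OF assms]; simp)+

lemma approx_bounds:
  "0 \<le> upper_approx d s c x" "upper_approx d s c x \<le> 1"
  "0 \<le> lower_approx d s c x" "lower_approx d s c x \<le> 1"
  unfolding upper_approx_def lower_approx_def using ramp_bounds by (auto intro!: mult_le_one)

lemma indicator_above_graph_le_upper_approx:
  assumes "0 < d"
  shows "indicator (above_graph Td X s c) x \<le> upper_approx d s c x"
proof (cases "x \<in> above_graph Td X s c")
  case True
  then have "ramp d (s + d - fst x) = 1" "ramp d (snd x - c (fst x) + d) = 1"
    using assms by (auto intro!: ramp_eq_1 simp: above_graph_def)
  then show ?thesis using True by (simp add: upper_approx_def)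
qed (simp add: approx_bounds)

lemma lower_approx_le_indicator_above_graph:
  assumes "0 < d" "Td \<subseteq> {0..}" "x \<in> Td \<times> X"
  shows "lower_approx d s c x \<le> indicator (above_graph Td X s c) x"
proof (cases "x \<in> above_graph Td X s c")
  case False
  with assms have "s < fst x \<or> snd x \<le> c (fst x)"
    by (auto simp: above_graph_def)
  then have "ramp d (s - fst x) = 0 \<or> ramp d (snd x - c (fst x) - d) = 0"
    using assms(1) by (auto intro!: ramp_eq_0)
  then show ?thesis using False by (auto simp: lower_approx_def)
qed (simp add: approx_bounds)

definition boundary_strips :: "real \<Rightarrow> real \<Rightarrow> (real \<Rightarrow> real) \<Rightarrow> (real \<times> real) set"
  where "boundary_strips d s c =
    {x. s - d < fst x \<and> fst x < s + d} \<union> {x. \<bar>snd x - c (fst x)\<bar> < 2 * d}"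

lemma open_boundary_strips:
  assumes "continuous_on UNIV c"
  shows "open (boundary_strips d s c)"
  unfolding boundary_strips_def
  by (intro open_Un open_Collect_conj open_Collect_less continuous_intros
      continuous_on_compose2[OF assms]; simp)+

lemma upper_minus_lower_approx_le:
  assumes "0 < d"
  shows "upper_approx d s c x - lower_approx d s c x \<le> indicator (boundary_strips d s c) x"
proof (cases "s - d < fst x \<and> fst x < s + d \<or> \<bar>snd x - c (fst x)\<bar> < 2 * d")
  case True
  then show ?thesis using approx_bounds[of d s c x] by (auto simp: boundary_strips_def)
next
  case False
  have "upper_approx d s c x \<le> lower_approx d s c x"
  proof (cases "s + d \<le> fst x \<or> snd x - c (fst x) \<le> - 2 * d")
    case True
    then have "ramp d (s + d - fst x) = 0 \<or> ramp d (snd x - c (fst x) + d) = 0"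
      using assms by (auto intro!: ramp_eq_0)
    then show ?thesis using approx_bounds[of d s c x] by (auto simp: upper_approx_def)
  next
    case False
    with \<open>\<not> (s - d < fst x \<and> fst x < s + d \<or> \<bar>snd x - c (fst x)\<bar> < 2 * d)\<close>
    have "fst x \<le> s - d" "2 * d \<le> snd x - c (fst x)" by auto
    then show ?thesis
      using assms by (simp add: upper_approx_def lower_approx_def ramp_eq_1)
  qed
  then show ?thesis using False by (simp add: boundary_strips_def)
qed

lemma integral_approx_above_graph:
  assumes F: "F \<in> P_mG Td Ta X m G" and "Td \<subseteq> {0..}" "closed Td" "closed X"
    and c: "continuous_on UNIV c" and "0 < d"
  shows "measure F (above_graph Td X s c) \<le> integral\<^sup>L F (upper_approx d s c)"
    and "integral\<^sup>L F (lower_approx d s c) \<le> measure F (above_graph Td X s c)"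
proof -
  interpret prob_space F using P_mG_D(1)[OF F] .
  let ?A = "above_graph Td X s c"
  have sets_F: "sets F = sets borel" by (rule P_mG_D(2)[OF F])
  have "?A \<in> events" using sets_F assms by (auto intro: above_graph_borel)
  then have indicator_A: "integrable F (indicator ?A :: _ \<Rightarrow> real)"
    "measure F ?A = integral\<^sup>L F (indicator ?A)"
    by (auto intro!: integrable_real_indicator simp: less_top[symmetric])
  have integrable: "integrable F (upper_approx d s c)" "integrable F (lower_approx d s c)"
    using approx_bounds[of d s c] continuous_on_approx[OF c] sets_F
    by (auto intro!: integrable_continuous_bounded[where B = 1] finite_measure_axioms)
  show "measure F ?A \<le> integral\<^sup>L F (upper_approx d s c)"
    unfolding indicator_A(2)
    by (rule integral_mono[OF indicator_A(1) integrable(1)])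
      (rule indicator_above_graph_le_upper_approx[OF \<open>0 < d\<close>])
  show "integral\<^sup>L F (lower_approx d s c) \<le> measure F ?A"
    unfolding indicator_A(2)
  proof (rule integral_mono_AE[OF integrable(2) indicator_A(1)])
    show "AE x in F. lower_approx d s c x \<le> indicator ?A x"
      using P_mG_D(3)[OF F]
      by eventually_elim (rule lower_approx_le_indicator_above_graph[OF \<open>0 < d\<close> \<open>Td \<subseteq> {0..}\<close>])
  qed
qed

lemma measure_boundary_strips_le:
  assumes F: "F \<in> P_mG Td Ta {Xmin..Xmax} m G" and "0 \<le> G" "Xmin \<le> Xmax"
    and Td: "closed Td" "Td \<subseteq> {0..T}" and "0 \<le> T" and c: "continuous_on UNIV c" and "0 < d"
  shows "measure F (boundary_strips d s c \<inter> (Td \<times> {Xmin..Xmax}))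
    \<le> d * (G * (2 * (Xmax - Xmin) + 4 * T))"
proof -
  interpret prob_space F using P_mG_D(1)[OF F] .
  let ?D = "Td \<times> {Xmin..Xmax}"
  define W1 where "W1 = {x::real \<times> real. s - d < fst x \<and> fst x < s + d} \<inter> ?D"
  define W2 where "W2 = {x::real \<times> real. \<bar>snd x - c (fst x)\<bar> < 2 * d} \<inter> ?D"
  have "?D \<in> sets borel" using Td by (intro borel_closed closed_Times) auto
  moreover have "open {x::real \<times> real. s - d < fst x \<and> fst x < s + d}"
    "open {x::real \<times> real. \<bar>snd x - c (fst x)\<bar> < 2 * d}"
    by (intro open_Collect_conj open_Collect_less continuous_intros
        continuous_on_compose2[OF c]; simp)+
  ultimately have W_borel: "W1 \<in> sets borel" "W2 \<in> sets borel"
    unfolding W1_def W2_def by auto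
  have "measure F (W1 \<union> W2) \<le> measure F W1 + measure F W2"
    using W_borel P_mG_D(2)[OF F] by (intro measure_subadditive) auto
  also have "measure F W1 \<le> G * (((s + d) - (s - d)) * (Xmax - Xmin))"
  proof (rule measure_P_mG_band_le[OF F \<open>0 \<le> G\<close> W_borel(1)])
    show "\<exists>l. {\<xi>. (\<tau>, \<xi>) \<in> W1} \<subseteq> {l..l + (Xmax - Xmin)}" for \<tau>
      by (rule exI[of _ Xmin]) (auto simp: W1_def)
  qed (use \<open>0 < d\<close> \<open>Xmin \<le> Xmax\<close> in \<open>auto simp: W1_def\<close>)
  also have "measure F W2 \<le> G * ((T - 0) * (4 * d))"
  proof (rule measure_P_mG_band_le[OF F \<open>0 \<le> G\<close> W_borel(2)])
    show "\<exists>l. {\<xi>. (\<tau>, \<xi>) \<in> W2} \<subseteq> {l..l + 4 * d}" for \<tau>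
      by (rule exI[of _ "c \<tau> - 2 * d"]) (auto simp: W2_def)
  qed (use \<open>0 < d\<close> \<open>0 \<le> T\<close> Td in \<open>auto simp: W2_def\<close>)
  finally show ?thesis
    by (simp add: W1_def W2_def boundary_strips_def Int_Un_distrib2 algebra_simps)
qed

lemma integral_upper_approx_le:
  assumes F: "F \<in> P_mG Td Ta {Xmin..Xmax} m G" and "0 \<le> G" "Xmin \<le> Xmax"
    and Td: "closed Td" "Td \<subseteq> {0..T}" and "0 \<le> T" and c: "continuous_on UNIV c" and "0 < d"
  shows "integral\<^sup>L F (upper_approx d s c)
    \<le> integral\<^sup>L F (lower_approx d s c) + d * (G * (2 * (Xmax - Xmin) + 4 * T))"
proof -
  interpret prob_space F using P_mG_D(1)[OF F] .
  let ?W = "boundary_strips d s c \<inter> (Td \<times> {Xmin..Xmax})"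
  have sets_F: "sets F = sets borel" by (rule P_mG_D(2)[OF F])
  have "?W \<in> sets borel"
    using Td open_boundary_strips[OF c]
    by (intro sets.Int borel_closed borel_open closed_Times) auto
  then have indicator_W: "integrable F (indicator ?W :: _ \<Rightarrow> real)"
    "integral\<^sup>L F (indicator ?W) = measure F ?W"
    using sets_F sets_eq_imp_space_eq[OF sets_F]
    by (auto intro!: integrable_real_indicator simp: less_top[symmetric])
  have integrable: "integrable F (upper_approx d s c)" "integrable F (lower_approx d s c)"
    using approx_bounds[of d s c] continuous_on_approx[OF c] sets_F
    by (auto intro!: integrable_continuous_bounded[where B = 1] finite_measure_axioms)
  have "integral\<^sup>L F (upper_approx d s c) - integral\<^sup>L F (lower_approx d s c)
      = integral\<^sup>L F (\<lambda>x. upper_approx d s c x - lower_approx d s c x)"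
    using integrable by simp
  also have "\<dots> \<le> integral\<^sup>L F (indicator ?W)"
  proof (rule integral_mono_AE[OF _ indicator_W(1)])
    show "AE x in F. upper_approx d s c x - lower_approx d s c x \<le> indicator ?W x"
      using P_mG_D(3)[OF F]
      by eventually_elim (simp add: indicator_inter_arith upper_minus_lower_approx_le[OF \<open>0 < d\<close>])
  qed (use integrable in simp)
  also have "\<dots> \<le> d * (G * (2 * (Xmax - Xmin) + 4 * T))"
    unfolding indicator_W(2) by (rule measure_boundary_strips_le[OF assms])
  finally show ?thesis by simp
qed

lemma weak_conv_plane_measure_above_graph:
  assumes Fs: "\<And>k. Fs k \<in> P_mG Td Ta {Xmin..Xmax} m G" and F: "F \<in> P_mG Td Ta {Xmin..Xmax} m G"
    and weak: "weak_conv_plane Fs F" and G: "0 \<le> G" and X: "Xmin \<le> Xmax"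
    and Td: "closed Td" "Td \<subseteq> {0..T}" and T: "0 \<le> T" and c: "continuous_on UNIV c"
  shows "(\<lambda>k. measure (Fs k) (above_graph Td {Xmin..Xmax} s c))
    \<longlonglongrightarrow> measure F (above_graph Td {Xmin..Xmax} s c)"
proof (rule weak_conv_plane_tendsto_measure[OF weak])
  fix e :: real
  assume "0 < e"
  define K where "K = G * (2 * (Xmax - Xmin) + 4 * T)"
  define d where "d = e / (K + 1)"
  have "0 \<le> K" using G X T by (simp add: K_def)
  then have "0 < d" "d * K \<le> e"
    using \<open>0 < e\<close> by (auto simp: d_def field_simps)
  have bounded: "bounded (range (upper_approx d s c))" "bounded (range (lower_approx d s c))"
    using approx_bounds[of d s c] by (auto simp: bounded_iff intro!: exI[of _ 1])
  have "Td \<subseteq> {0..}" using Td by auto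
  note approx =
    integral_approx_above_graph[OF _ this Td(1) closed_atLeastAtMost c \<open>0 < d\<close>, where s = s]
  note gap = integral_upper_approx_le[OF F G X Td T c \<open>0 < d\<close>, of s]
  show "\<exists>f g. continuous_on UNIV f \<and> bounded (range f) \<and> continuous_on UNIV g \<and> bounded (range g) \<and>
      (\<forall>k. integral\<^sup>L (Fs k) g \<le> measure (Fs k) (above_graph Td {Xmin..Xmax} s c) \<and>
        measure (Fs k) (above_graph Td {Xmin..Xmax} s c) \<le> integral\<^sup>L (Fs k) f) \<and>
      integral\<^sup>L F f \<le> measure F (above_graph Td {Xmin..Xmax} s c) + e \<and>
      measure F (above_graph Td {Xmin..Xmax} s c) - e \<le> integral\<^sup>L F g"
    by (rule exI[of _ "upper_approx d s c"], rule exI[of _ "lower_approx d s c"])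
      (use continuous_on_approx[OF c] bounded approx[OF Fs] approx[OF F] gap
        \<open>d * K \<le> e\<close>[unfolded K_def] in auto)
qed

section \<open>The sets \<open>S\<^sub>t(z)\<close>\<close>

text \<open>Since \<open>z\<close> is only given on \<open>[0, T]\<close>, the boundary curve is built from the clamped
  extension \<^const>\<open>ext_cont\<close>, which is continuous on all of \<open>\<real>\<close> as the test functions of
  weak convergence must be.\<close>

lemma S_set_eq_above_graph:
  assumes "Td \<subseteq> {0..T}"
  shows "S_set Td X s z = above_graph Td X s (\<lambda>\<tau>. z s - ext_cont z 0 T \<tau>)"
  using assms by (auto simp: S_set_def above_graph_def cbox_interval)

lemma continuous_on_minus_ext_cont:
  fixes z :: "real \<Rightarrow> real"
  assumes "continuous_on {0..T} z"
  shows "continuous_on UNIV (\<lambda>\<tau>. a - ext_cont z 0 T \<tau>)"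
  using assms by (intro continuous_intros) (simp add: cbox_interval)

lemma measure_S_set_lipschitz:
  assumes F: "F \<in> P_mG Td Ta X m G" and "0 \<le> G" "closed Td" "closed X" "Td \<subseteq> {0..T}"
    and y: "continuous_on {0..T} y1" "continuous_on {0..T} y2" and s: "s \<in> {0..T}"
    and close: "\<And>\<tau>. \<tau> \<in> {0..s} \<Longrightarrow> \<bar>y1 \<tau> - y2 \<tau>\<bar> \<le> \<eta>"
  shows "\<bar>measure F (S_set Td X s y1) - measure F (S_set Td X s y2)\<bar> \<le> G * (s * (2 * \<eta>))"
  unfolding S_set_eq_above_graph[OF \<open>Td \<subseteq> {0..T}\<close>]
proof (rule measure_above_graph_lipschitz[OF F])
  fix \<tau>
  assume "\<tau> \<in> {0..s}"
  then have "\<tau> \<in> cbox 0 T" "\<bar>y1 s - y2 s\<bar> \<le> \<eta>" "\<bar>y1 \<tau> - y2 \<tau>\<bar> \<le> \<eta>"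
    using s close[of s] close[of \<tau>] by (auto simp: cbox_interval)
  then show "\<bar>(y1 s - ext_cont y1 0 T \<tau>) - (y2 s - ext_cont y2 0 T \<tau>)\<bar> \<le> 2 * \<eta>"
    by simp
qed (use assms continuous_on_minus_ext_cont in auto)

lemma measure_S_set_time_diff_le:
  assumes F: "F \<in> P_mG Td Ta {Xmin..Xmax} m G" and "0 \<le> G" "Xmin \<le> Xmax"
    and Td: "closed Td" "Td \<subseteq> {0..T}" and z: "continuous_on {0..T} z"
    and s: "s \<in> {0..T}" "s' \<in> {0..T}"
  shows "\<bar>measure F (S_set Td {Xmin..Xmax} s' z) - measure F (S_set Td {Xmin..Xmax} s z)\<bar>
    \<le> G * (T * \<bar>z s' - z s\<bar>) + G * (\<bar>s' - s\<bar> * (Xmax - Xmin))"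
proof -
  let ?A = "\<lambda>t a. above_graph Td {Xmin..Xmax} t (\<lambda>\<tau>. a - ext_cont z 0 T \<tau>)"
  have "\<bar>measure F (?A s' (z s')) - measure F (?A s' (z s))\<bar> \<le> G * (s' * \<bar>z s' - z s\<bar>)"
    using assms continuous_on_minus_ext_cont[OF z]
    by (intro measure_above_graph_lipschitz[OF F]) auto
  also have "\<dots> \<le> G * (T * \<bar>z s' - z s\<bar>)"
    using assms by (intro mult_left_mono mult_right_mono) auto
  finally have "\<bar>measure F (?A s' (z s')) - measure F (?A s' (z s))\<bar> \<le> G * (T * \<bar>z s' - z s\<bar>)" .
  moreover have "\<bar>measure F (?A s' (z s)) - measure F (?A s (z s))\<bar>
      \<le> G * (\<bar>s' - s\<bar> * (Xmax - Xmin))"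
    using assms continuous_on_minus_ext_cont[OF z]
    by (intro measure_above_graph_time_lipschitz[OF F]) auto
  ultimately show ?thesis
    unfolding S_set_eq_above_graph[OF Td(2)] by linarith
qed

lemma continuous_on_measure_S_set:
  assumes F: "F \<in> P_mG Td Ta {Xmin..Xmax} m G" and "0 \<le> G" "Xmin \<le> Xmax"
    and Td: "closed Td" "Td \<subseteq> {0..T}" and z: "continuous_on {0..T} z"
  shows "continuous_on {0..T} (\<lambda>s. measure F (S_set Td {Xmin..Xmax} s z))"
  unfolding continuous_on_def
proof (intro ballI)
  fix s0
  assume s0: "s0 \<in> {0..T}"
  let ?\<phi> = "\<lambda>s. measure F (S_set Td {Xmin..Xmax} s z)"
  let ?B = "\<lambda>s. G * (T * \<bar>z s - z s0\<bar>) + G * (\<bar>s - s0\<bar> * (Xmax - Xmin))"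
  have "(z \<longlongrightarrow> z s0) (at s0 within {0..T})"
    using z s0 by (simp add: continuous_on_def)
  then have "(?B \<longlongrightarrow> ?B s0) (at s0 within {0..T})"
    by (intro tendsto_intros)
  then have "(?B \<longlongrightarrow> 0) (at s0 within {0..T})"
    by simp
  then have "((\<lambda>s. ?\<phi> s - ?\<phi> s0) \<longlongrightarrow> 0) (at s0 within {0..T})"
  proof (rule Lim_null_comparison[rotated])
    show "\<forall>\<^sub>F s in at s0 within {0..T}. norm (?\<phi> s - ?\<phi> s0) \<le> ?B s"
      unfolding eventually_at_filter
      by (rule always_eventually) (use measure_S_set_time_diff_le[OF assms s0] in auto)
  qed
  then show "(?\<phi> \<longlongrightarrow> ?\<phi> s0) (at s0 within {0..T})"
    by (simp add: LIM_zero_iff)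
qed

lemma integrable_measure_S_set_diff:
  assumes F1: "F1 \<in> P_mG Td Ta {Xmin..Xmax} m G" and F2: "F2 \<in> P_mG Td Ta {Xmin..Xmax} m G"
    and "0 \<le> G" "Xmin \<le> Xmax" and Td: "closed Td" "Td \<subseteq> {0..T}" and z: "continuous_on {0..T} z"
  shows "(\<lambda>s. \<bar>measure F1 (S_set Td {Xmin..Xmax} s z) - measure F2 (S_set Td {Xmin..Xmax} s z)\<bar>)
    integrable_on {0..T}"
  using continuous_on_measure_S_set[OF F1 assms(3-4) Td z]
    continuous_on_measure_S_set[OF F2 assms(3-4) Td z]
  by (intro integrable_continuous_interval continuous_intros)

lemma integral_measure_S_set_tendsto_0:
  assumes Fs: "\<And>k. Fs k \<in> P_mG Td Ta {Xmin..Xmax} m G" and F: "F \<in> P_mG Td Ta {Xmin..Xmax} m G"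
    and weak: "weak_conv_plane Fs F" and "0 \<le> G" "Xmin \<le> Xmax"
    and Td: "closed Td" "Td \<subseteq> {0..T}" and "0 \<le> T" and z: "continuous_on {0..T} z"
  shows "(\<lambda>k. integral {0..T} (\<lambda>s. \<bar>measure (Fs k) (S_set Td {Xmin..Xmax} s z)
    - measure F (S_set Td {Xmin..Xmax} s z)\<bar>)) \<longlonglongrightarrow> 0"
proof -
  let ?e = "\<lambda>k s. \<bar>measure (Fs k) (S_set Td {Xmin..Xmax} s z)
    - measure F (S_set Td {Xmin..Xmax} s z)\<bar>"
  have "(\<lambda>k. integral {0..T} (?e k)) \<longlonglongrightarrow> integral {0..T} (\<lambda>s. 0)"
  proof (rule dominated_convergence(2))
    show "?e k integrable_on {0..T}" for k
      by (rule integrable_measure_S_set_diff[OF Fs F assms(4,5) Td z])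
    show "(\<lambda>s. 1::real) integrable_on {0..T}" by (simp add: integrable_continuous_interval)
    show "norm (?e k s) \<le> 1" for k s
      using prob_space.prob_le_1[OF P_mG_D(1)[OF Fs[of k]], of "S_set Td {Xmin..Xmax} s z"]
        prob_space.prob_le_1[OF P_mG_D(1)[OF F], of "S_set Td {Xmin..Xmax} s z"]
        measure_nonneg[of "Fs k" "S_set Td {Xmin..Xmax} s z"]
        measure_nonneg[of F "S_set Td {Xmin..Xmax} s z"]
      unfolding real_norm_def abs_abs by arith
    fix s
    have "(\<lambda>k. measure (Fs k) (S_set Td {Xmin..Xmax} s z)) \<longlonglongrightarrow> measure F (S_set Td {Xmin..Xmax} s z)"
      unfolding S_set_eq_above_graph[OF Td(2)]
      by (rule weak_conv_plane_measure_above_graph[OF Fs F weak assms(4,5) Td \<open>0 \<le> T\<close>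
          continuous_on_minus_ext_cont[OF z]])
    then have "(\<lambda>k. ?e k s)
        \<longlonglongrightarrow> \<bar>measure F (S_set Td {Xmin..Xmax} s z) - measure F (S_set Td {Xmin..Xmax} s z)\<bar>"
      by (intro tendsto_intros)
    then show "(\<lambda>k. ?e k s) \<longlonglongrightarrow> 0" by simp
  qed
  then show ?thesis by simp
qed

section \<open>Stability of solutions\<close>

lemma lipschitz_measure_S_set_diff_le:
  assumes Fk: "Fk \<in> P_mG Td Ta X m G" and "0 \<le> G" "closed Td" "closed X" "Td \<subseteq> {0..T}"
    and V: "L-lipschitz_on {0..} V"
    and y: "continuous_on {0..T} zk" "continuous_on {0..T} z" and s: "s \<in> {0..T}"
    and close: "\<And>\<tau>. \<tau> \<in> {0..s} \<Longrightarrow> \<bar>zk \<tau> - z \<tau>\<bar> \<le> \<eta>"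
  shows "\<bar>V (measure Fk (S_set Td X s zk)) - V (measure F (S_set Td X s z))\<bar>
    \<le> L * (G * (s * (2 * \<eta>)) + \<bar>measure Fk (S_set Td X s z) - measure F (S_set Td X s z)\<bar>)"
proof -
  have "\<bar>V (measure Fk (S_set Td X s zk)) - V (measure F (S_set Td X s z))\<bar>
      \<le> L * \<bar>measure Fk (S_set Td X s zk) - measure F (S_set Td X s z)\<bar>"
    using lipschitz_onD[OF V] by (simp add: dist_real_def)
  also have "\<dots>
      \<le> L * (G * (s * (2 * \<eta>)) + \<bar>measure Fk (S_set Td X s z) - measure F (S_set Td X s z)\<bar>)"
    using measure_S_set_lipschitz[OF assms(1-5) y s close] lipschitz_on_nonneg[OF V]
    by (intro mult_left_mono) auto
  finally show ?thesis .
qed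

lemma solves_eq_diff_contraction:
  fixes L lam M :: real
  assumes Fk: "Fk \<in> P_mG Td Ta {Xmin..Xmax} m G" and F: "F \<in> P_mG Td Ta {Xmin..Xmax} m G"
    and "0 \<le> G" "Xmin \<le> Xmax" and Td: "closed Td" "Td \<subseteq> {0..T}"
    and V: "L-lipschitz_on {0..} V"
    and sol_k: "solves_eq T Td {Xmin..Xmax} V Fk zk" and sol: "solves_eq T Td {Xmin..Xmax} V F z"
    and lam: "0 < lam" "4 * L * G * T \<le> lam"
    and M: "\<And>\<tau>. \<tau> \<in> {0..T} \<Longrightarrow> \<bar>zk \<tau> - z \<tau>\<bar> \<le> M * exp (lam * \<tau>)"
    and t: "t \<in> {0..T}"
  defines "e \<equiv> \<lambda>s. \<bar>measure Fk (S_set Td {Xmin..Xmax} s z) - measure F (S_set Td {Xmin..Xmax} s z)\<bar>"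
  shows "\<bar>zk t - z t\<bar> \<le> M / 2 * exp (lam * t) + L * integral {0..T} e"
proof -
  let ?S = "\<lambda>F s y. measure F (S_set Td {Xmin..Xmax} s y)"
  define K where "K = 2 * L * G * T * M"
  have "0 \<le> L" using V by (rule lipschitz_on_nonneg)
  have "\<bar>zk 0 - z 0\<bar> \<le> M" using M[of 0] t by simp
  then have "0 \<le> M" by (meson abs_ge_zero order_trans)
  have "0 \<le> K" "K \<le> lam * (M / 2)"
    using \<open>0 \<le> L\<close> \<open>0 \<le> G\<close> \<open>0 \<le> M\<close> t mult_right_mono[OF lam(2) \<open>0 \<le> M\<close>]
    by (auto simp: K_def)
  have cont: "continuous_on {0..T} zk" "continuous_on {0..T} z"
    using sol_k sol by (auto simp: solves_eq_def)
  have e_int: "e integrable_on {0..T}" "e integrable_on {0..t}"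
    unfolding e_def using integrable_measure_S_set_diff[OF Fk F assms(3,4) Td cont(2)] t
    by (auto intro: integrable_on_subinterval)
  have diff: "((\<lambda>s. V (?S Fk s zk) - V (?S F s z)) has_integral zk t - z t) {0..t}"
    using sol_k sol t by (intro has_integral_diff) (auto simp: solves_eq_def)
  have bound: "norm (V (?S Fk s zk) - V (?S F s z)) \<le> K * exp (lam * s) + L * e s"
    if s: "s \<in> {0..t}" for s
  proof -
    have close: "\<bar>zk \<tau> - z \<tau>\<bar> \<le> M * exp (lam * s)" if "\<tau> \<in> {0..s}" for \<tau>
    proof -
      have "\<bar>zk \<tau> - z \<tau>\<bar> \<le> M * exp (lam * \<tau>)" using M that s t by auto
      also have "\<dots> \<le> M * exp (lam * s)"
        using that lam \<open>0 \<le> M\<close> by (intro mult_left_mono) (auto intro: mult_left_mono)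
      finally show ?thesis .
    qed
    have "\<bar>V (?S Fk s zk) - V (?S F s z)\<bar> \<le> L * (G * (s * (2 * (M * exp (lam * s)))) + e s)"
      unfolding e_def using s t
      by (intro lipschitz_measure_S_set_diff_le[OF Fk assms(3) Td(1) _ Td(2) V cont _ close]) auto
    also have "\<dots> \<le> L * (G * (T * (2 * (M * exp (lam * s)))) + e s)"
      using s t \<open>0 \<le> L\<close> \<open>0 \<le> G\<close> \<open>0 \<le> M\<close>
      by (intro mult_left_mono add_right_mono mult_right_mono) auto
    finally show ?thesis by (simp add: K_def algebra_simps)
  qed
  have majorant: "((\<lambda>s. K * exp (lam * s) + L * e s)
      has_integral K * ((exp (lam * t) - 1) / lam) + L * integral {0..t} e) {0..t}"
    using has_integral_exp_linear[of lam t] lam t e_int(2)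
    by (intro has_integral_add has_integral_mult_right integrable_integral) auto
  have "\<bar>zk t - z t\<bar> \<le> K * ((exp (lam * t) - 1) / lam) + L * integral {0..t} e"
    using integral_norm_bound_integral[OF has_integral_integrable[OF diff]
        has_integral_integrable[OF majorant] bound]
      integral_unique[OF diff] integral_unique[OF majorant]
    by simp
  also have "\<dots> \<le> M / 2 * exp (lam * t) + L * integral {0..T} e"
  proof (rule add_mono)
    have "K * ((exp (lam * t) - 1) / lam) \<le> lam * (M / 2) * (exp (lam * t) / lam)"
      using \<open>0 \<le> K\<close> \<open>K \<le> lam * (M / 2)\<close> lam t
      by (intro mult_mono divide_right_mono) auto
    then show "K * ((exp (lam * t) - 1) / lam) \<le> M / 2 * exp (lam * t)"
      using lam by simp
    show "L * integral {0..t} e \<le> L * integral {0..T} e"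
      using e_int t \<open>0 \<le> L\<close> by (intro mult_left_mono integral_subset_le) (auto simp: e_def)
  qed
  finally show ?thesis .
qed

lemma solves_eq_diff_le:
  assumes Fk: "Fk \<in> P_mG Td Ta {Xmin..Xmax} m G" and F: "F \<in> P_mG Td Ta {Xmin..Xmax} m G"
    and "0 \<le> G" "Xmin \<le> Xmax" and Td: "closed Td" "Td \<subseteq> {0..T}"
    and V: "L-lipschitz_on {0..} V"
    and sol_k: "solves_eq T Td {Xmin..Xmax} V Fk zk" and sol: "solves_eq T Td {Xmin..Xmax} V F z"
    and t: "t \<in> {0..T}"
  shows "\<bar>zk t - z t\<bar> \<le> 2 * (L * integral {0..T} (\<lambda>s. \<bar>measure Fk (S_set Td {Xmin..Xmax} s z)
    - measure F (S_set Td {Xmin..Xmax} s z)\<bar>)) * exp ((4 * L * G * T + 1) * T)"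
    (is "_ \<le> 2 * ?E * exp (?lam * T)")
proof -
  have "0 \<le> L" using V by (rule lipschitz_on_nonneg)
  then have "0 < ?lam" using \<open>0 \<le> G\<close> t by (simp add: add_nonneg_pos)
  have cont: "continuous_on {0..T} zk" "continuous_on {0..T} z"
    using sol_k sol by (auto simp: solves_eq_def)
  have "0 \<le> ?E"
    using integrable_measure_S_set_diff[OF Fk F assms(3,4) Td cont(2)] \<open>0 \<le> L\<close>
    by (intro mult_nonneg_nonneg integral_nonneg) auto
  have "\<bar>zk t - z t\<bar> \<le> 2 * ?E * exp (?lam * t)"
    using cont \<open>0 < ?lam\<close> \<open>0 \<le> ?E\<close> solves_eq_diff_contraction[OF assms(1-9)]
    by (intro bielecki_bound[where w = "\<lambda>t. \<bar>zk t - z t\<bar>", OF _ _ _ _ t] continuous_intros) auto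
  also have "\<dots> \<le> 2 * ?E * exp (?lam * T)"
    using t \<open>0 < ?lam\<close> \<open>0 \<le> ?E\<close> by (intro mult_left_mono) auto
  finally show ?thesis .
qed

theorem proposition4:
  fixes Tmax Xmin Xmax G :: real
    and Td Ta :: "real set"
    and m :: "(real \<times> real) measure"
    and V :: "real \<Rightarrow> real"
    and Fs :: "nat \<Rightarrow> (real \<times> real) measure" and F :: "(real \<times> real) measure"
    and zs :: "nat \<Rightarrow> real \<Rightarrow> real" and z :: "real \<Rightarrow> real"
  assumes "compact Td" "Td \<subseteq> {0..Tmax}" "compact Ta" "Ta \<subseteq> {0..Tmax}"
    and "0 \<le> Xmin" "Xmin < Xmax"
    and "prob_space m" "sets m = sets borel" "emeasure m ({Xmin..Xmax} \<times> Ta) = 1"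
    and "G > 0"
    and "V ` {0..} \<subseteq> {0..}" "strict_antimono_on {0..} V"
    and "\<exists>L. L-lipschitz_on {0..} V"
    and "\<And>k. Fs k \<in> P_mG Td Ta {Xmin..Xmax} m G"
    and "weak_conv_plane Fs F"
    and "F \<in> P_mG Td Ta {Xmin..Xmax} m G"
    and "\<And>k. solves_eq Tmax Td {Xmin..Xmax} V (Fs k) (zs k)"
    and "solves_eq Tmax Td {Xmin..Xmax} V F z"
  shows "uniform_limit {0..Tmax} zs z sequentially"
proof (cases "0 \<le> Tmax")
  case False
  then show ?thesis by (simp add: uniform_limit_iff)
next
  case True
  obtain L where V: "L-lipschitz_on {0..} V" using assms(13) by blast
  have Td: "closed Td" "Td \<subseteq> {0..Tmax}" using assms(1,2) by (auto intro: compact_imp_closed)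
  have "0 \<le> G" "Xmin \<le> Xmax" using assms(6,10) by auto
  have z: "continuous_on {0..Tmax} z" using assms(18) by (simp add: solves_eq_def)
  define I where "I k = integral {0..Tmax} (\<lambda>s. \<bar>measure (Fs k) (S_set Td {Xmin..Xmax} s z)
    - measure F (S_set Td {Xmin..Xmax} s z)\<bar>)" for k
  have "I \<longlonglongrightarrow> 0"
    unfolding I_def
    by (rule integral_measure_S_set_tendsto_0[OF assms(14,16,15) \<open>0 \<le> G\<close> \<open>Xmin \<le> Xmax\<close> Td True z])
  then have "(\<lambda>k. 2 * (L * I k) * exp ((4 * L * G * Tmax + 1) * Tmax)) \<longlonglongrightarrow> 0"
    by (auto intro: tendsto_eq_intros)
  moreover have "dist (zs k t) (z t) \<le> 2 * (L * I k) * exp ((4 * L * G * Tmax + 1) * Tmax)"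
    if "t \<in> {0..Tmax}" for k t
    using solves_eq_diff_le[OF assms(14,16) \<open>0 \<le> G\<close> \<open>Xmin \<le> Xmax\<close> Td V assms(17,18) that]
    by (simp add: I_def dist_real_def)
  ultimately show ?thesis
    by (intro uniform_limit_dist_le)
qed

end
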